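(* Let $k\geq 2$ and let $G$ be a finite bipartite graph with $d(G)\geq k$. Then $G$ contains a subgraph $H$, bipartite with vertex classes $A$ and $B$, such that $d(H)\geq k/4$, $d_H(v)\leq k$ for every $v\in A$, and either (1) $|A|\geq k^6|B|$, or (2) $\Delta(H)\leq k^7$.
   Context: $d(F)=2e(F)/|V(F)|$ is the average degree, $d_H(v)$ the degree of $v$ in $H$, and $\Delta(H)$ the maximum degree of $H$. *)

theory Defs
  imports Complex_Main
begin

definition graph :: "'a set \<Rightarrow> 'a set set \<Rightarrow> bool" where
  "graph V E \<longleftrightarrow> finite V \<and> (\<forall>e\<in>E. card e = 2 \<and> e \<subseteq> V)"

definition subgraph :: "'a set \<Rightarrow> 'a set set \<Rightarrow> 'a set \<Rightarrow> 'a set set \<Rightarrow> bool" where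
  "subgraph V' E' V E \<longleftrightarrow> graph V' E' \<and> V' \<subseteq> V \<and> E' \<subseteq> E"

definition bipartite_with :: "'a set \<Rightarrow> 'a set set \<Rightarrow> 'a set \<Rightarrow> 'a set \<Rightarrow> bool" where
  "bipartite_with V E A B \<longleftrightarrow> A \<inter> B = {} \<and> A \<union> B = V \<and>
     (\<forall>e\<in>E. \<exists>a\<in>A. \<exists>b\<in>B. e = {a, b})"

definition bipartite :: "'a set \<Rightarrow> 'a set set \<Rightarrow> bool" where
  "bipartite V E \<longleftrightarrow> (\<exists>A B. bipartite_with V E A B)"

definition avg_degree :: "'a set \<Rightarrow> 'a set set \<Rightarrow> real" where
  "avg_degree V E = 2 * real (card E) / real (card V)"

definition degree :: "'a set set \<Rightarrow> 'a \<Rightarrow> nat" where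
  "degree E v = card {e\<in>E. v \<in> e}"

definition max_degree :: "'a set \<Rightarrow> 'a set set \<Rightarrow> nat" where
  "max_degree V E = Max ({0} \<union> degree E ` V)"

end

(* Pass to a nonempty induced subgraph of minimum degree > k/2 (a vertex-minimal W with
   e(W) \<ge> k|W|/2) and let A be its larger colour class.  Keeping exactly \<lceil>k/2\<rceil> edges at
   every vertex of A puts all A-degrees in [k/2, k].  Split the other class B into the
   vertices of degree > k^7 and the rest; the edges at one of the two parts B' are at least
   half of all edges, hence at least k|A|/4, and as |B'| \<le> |A| these edges form a graph H on
   A \<union> B' with d(H) \<ge> k/4.  If B' is the high-degree part, counting its edges gives
   k^7|B'| \<le> k|A|, which is (1); otherwise every degree in H is at most k^7, which is (2). *)

theory Submission
  imports Defs
begin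

lemma subgraph_mono:
  "subgraph VH EH V' E' \<Longrightarrow> V' \<subseteq> V \<Longrightarrow> E' \<subseteq> E \<Longrightarrow> subgraph VH EH V E"
  unfolding subgraph_def by blast

lemma degree_mono: "finite E \<Longrightarrow> F \<subseteq> E \<Longrightarrow> degree F v \<le> degree E v"
  unfolding degree_def by (rule card_mono) auto

lemma finite_edges: "graph V E \<Longrightarrow> finite E"
  unfolding graph_def by (metis Pow_iff finite_Pow_iff finite_subset subsetI)

lemma bipartite_with_edgeE:
  assumes "bipartite_with V E A B" "e \<in> E"
  obtains a b where "a \<in> A" "b \<in> B" "e = {a, b}"
  using assms unfolding bipartite_with_def by meson

lemma bipartite_withD:
  assumes "bipartite_with V E A B"
  shows "A \<inter> B = {}" "V = A \<union> B"
  using assms unfolding bipartite_with_def by simp_all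

lemma bipartite_with_edge_unique:
  assumes "bipartite_with V E A B" "e \<in> E" "b \<in> B" "b' \<in> B" "b \<in> e" "b' \<in> e"
  shows "b = b'"
proof -
  obtain x y where "x \<in> A" "y \<in> B" "e = {x, y}"
    by (rule bipartite_with_edgeE[OF assms(1,2)])
  then show ?thesis
    using assms(3-6) bipartite_withD(1)[OF assms(1)] by blast
qed

lemma bipartite_with_commute: "bipartite_with V E A B \<longleftrightarrow> bipartite_with V E B A"
  unfolding bipartite_with_def by (metis Int_commute Un_commute insert_commute)

lemma graph_if_bipartite_with:
  assumes "finite V" "bipartite_with V E A B"
  shows "graph V E"
  unfolding graph_def
proof (intro conjI ballI)
  fix e assume "e \<in> E"
  then obtain a b where ab: "a \<in> A" "b \<in> B" "e = {a, b}"
    by (rule bipartite_with_edgeE[OF assms(2)])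
  have "a \<noteq> b"
    using ab(1,2) bipartite_withD(1)[OF assms(2)] by blast
  then show "card e = 2"
    using ab(3) by simp
  show "e \<subseteq> V"
    using ab bipartite_withD(2)[OF assms(2)] by blast
qed (rule assms(1))

lemma bipartite_with_mono_edges:
  "bipartite_with V E A B \<Longrightarrow> F \<subseteq> E \<Longrightarrow> bipartite_with V F A B"
  unfolding bipartite_with_def by (meson subsetD)

lemma bipartite_with_induced:
  assumes "bipartite_with V E A B" "W \<subseteq> V"
  shows "bipartite_with W {e\<in>E. e \<subseteq> W} (A \<inter> W) (B \<inter> W)"
  unfolding bipartite_with_def
proof (intro conjI ballI)
  show "A \<inter> W \<inter> (B \<inter> W) = {}" "A \<inter> W \<union> B \<inter> W = W"
    using bipartite_withD[OF assms(1)] assms(2) by blast+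
  fix e assume "e \<in> {e\<in>E. e \<subseteq> W}"
  then obtain a b where "a \<in> A" "b \<in> B" "e = {a, b}" "e \<subseteq> W"
    using bipartite_with_edgeE[OF assms(1)] by blast
  then show "\<exists>a\<in>A \<inter> W. \<exists>b\<in>B \<inter> W. e = {a, b}"
    by blast
qed

lemma bipartite_with_edges_meeting:
  assumes "bipartite_with V E A B" "B' \<subseteq> B"
  shows "bipartite_with (A \<union> B') {e\<in>E. e \<inter> B' \<noteq> {}} A B'"
  unfolding bipartite_with_def
proof (intro conjI ballI)
  show "A \<inter> B' = {}"
    using assms bipartite_withD(1)[OF assms(1)] by blast
  fix e assume "e \<in> {e\<in>E. e \<inter> B' \<noteq> {}}"
  then obtain a b where "a \<in> A" "b \<in> B" "e = {a, b}" "e \<inter> B' \<noteq> {}"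
    using assms(1) bipartite_with_edgeE by blast
  then show "\<exists>a\<in>A. \<exists>b\<in>B'. e = {a, b}"
    using \<open>A \<inter> B' = {}\<close> by blast
qed simp

lemma card_edges_eq_sum_degree:
  assumes "finite V" "bipartite_with V E A B"
  shows "card E = (\<Sum>b\<in>B. degree E b)"
proof -
  have fin: "finite B" "finite E"
    using assms bipartite_withD(2)[OF assms(2)] finite_edges[OF graph_if_bipartite_with[OF assms]]
    by simp_all
  have "e \<in> (\<Union>b\<in>B. {e\<in>E. b \<in> e})" if "e \<in> E" for e
    using bipartite_with_edgeE[OF assms(2) that] that by blast
  then have "E = (\<Union>b\<in>B. {e\<in>E. b \<in> e})"
    by blast
  moreover have "card (\<Union>b\<in>B. {e\<in>E. b \<in> e}) = (\<Sum>b\<in>B. card {e\<in>E. b \<in> e})"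
  proof (rule card_UN_disjoint)
    show "\<forall>b\<in>B. \<forall>b'\<in>B. b \<noteq> b' \<longrightarrow> {e\<in>E. b \<in> e} \<inter> {e\<in>E. b' \<in> e} = {}"
    proof (intro ballI impI)
      fix b b' assume "b \<in> B" "b' \<in> B" "b \<noteq> b'"
      then show "{e\<in>E. b \<in> e} \<inter> {e\<in>E. b' \<in> e} = {}"
        using bipartite_with_edge_unique[OF assms(2)] by blast
    qed
  qed (use fin in auto)
  ultimately show ?thesis
    unfolding degree_def by simp
qed

lemma card_edges_meeting_eq_sum_degree:
  assumes "finite V" "bipartite_with V E A B" "B' \<subseteq> B"
  shows "card {e\<in>E. e \<inter> B' \<noteq> {}} = (\<Sum>b\<in>B'. degree E b)"
proof -
  have "finite (A \<union> B')"
    using assms bipartite_withD(2)[OF assms(2)] by (simp add: finite_subset)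
  then have "card {e\<in>E. e \<inter> B' \<noteq> {}} = (\<Sum>b\<in>B'. degree {e\<in>E. e \<inter> B' \<noteq> {}} b)"
    by (rule card_edges_eq_sum_degree[OF _ bipartite_with_edges_meeting[OF assms(2,3)]])
  also have "\<dots> = (\<Sum>b\<in>B'. degree E b)"
    unfolding degree_def by (rule sum.cong) (auto intro!: arg_cong[where f = card])
  finally show ?thesis .
qed

lemma avg_degree_bipartite_ge:
  fixes c :: real
  assumes "finite A" "finite B" "A \<inter> B = {}" "A \<noteq> {}" "card B \<le> card A"
    and "c * card A \<le> card E"
  shows "c \<le> avg_degree (A \<union> B) E"
proof (cases "c \<le> 0")
  case True
  then show ?thesis
    unfolding avg_degree_def by (smt (verit) divide_nonneg_nonneg of_nat_0_le_iff)
next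
  case False
  have card_AB: "card (A \<union> B) = card A + card B" "0 < card (A \<union> B)"
    using assms by (simp_all add: card_Un_disjoint card_gt_0_iff)
  have "c * card (A \<union> B) \<le> c * (2 * card A)"
    using False assms(5) card_AB(1) by (intro mult_left_mono) auto
  also have "\<dots> \<le> 2 * card E"
    using assms(6) by linarith
  finally show ?thesis
    unfolding avg_degree_def using card_AB(2) by (simp add: pos_le_divide_eq)
qed

lemma max_degree_le:
  fixes c :: real
  assumes "finite V" "0 \<le> c" "\<forall>v\<in>V. degree E v \<le> c"
  shows "max_degree V E \<le> c"
proof -
  have "Max ({0} \<union> degree E ` V) \<in> {0} \<union> degree E ` V"
    using assms(1) by (intro Max_in) auto
  then show ?thesis
    using assms(2,3) unfolding max_degree_def by auto
qed

lemma card_induced_edges_remove: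
  assumes "finite E"
  shows "card {e\<in>E. e \<subseteq> W} = card {e\<in>E. e \<subseteq> W - {w}} + degree {e\<in>E. e \<subseteq> W} w"
proof -
  let ?D = "{e\<in>{e\<in>E. e \<subseteq> W}. w \<in> e}"
  have "card {e\<in>E. e \<subseteq> W} = card ({e\<in>E. e \<subseteq> W - {w}} \<union> ?D)"
    by (rule arg_cong[where f = card]) blast
  also have "\<dots> = card {e\<in>E. e \<subseteq> W - {w}} + card ?D"
    by (rule card_Un_disjoint) (use assms in auto)
  finally show ?thesis
    unfolding degree_def .
qed

lemma exists_induced_subgraph_min_degree:
  fixes k :: real
  assumes "0 < k" "graph V E" "k \<le> avg_degree V E"
  obtains W where "W \<subseteq> V" "W \<noteq> {}" "\<forall>w\<in>W. k/2 < degree {e\<in>E. e \<subseteq> W} w"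
proof -
  \<comment> \<open>For a vertex-minimal W with P W, deleting a vertex of degree \<le> k/2 would preserve P.\<close>
  define P where "P W \<longleftrightarrow> W \<subseteq> V \<and> W \<noteq> {} \<and> k/2 * card W \<le> card {e\<in>E. e \<subseteq> W}" for W
  have fin: "finite V" "finite E"
    using assms(2) finite_edges unfolding graph_def by auto
  have "V \<noteq> {}"
    using assms(1,3) unfolding avg_degree_def by auto
  moreover have "{e\<in>E. e \<subseteq> V} = E"
    using assms(2) unfolding graph_def by blast
  ultimately have "P V"
    using assms(3) fin unfolding P_def avg_degree_def by (simp add: le_divide_eq card_gt_0_iff)
  then obtain W where "P W" and min: "\<And>W'. P W' \<Longrightarrow> card W \<le> card W'"
    using ex_has_least_nat by metis
  then have W: "W \<subseteq> V" "W \<noteq> {}" "k/2 * card W \<le> card {e\<in>E. e \<subseteq> W}"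
    unfolding P_def by auto
  have "k/2 < degree {e\<in>E. e \<subseteq> W} w" if "w \<in> W" for w
  proof (cases "W = {w}")
    case True
    have no_edges: "{e\<in>E. e \<subseteq> {w}} = {}"
      using assms(2) unfolding graph_def by (fastforce dest!: subset_singletonD)
    then have "k/2 * card W \<le> 0"
      using W(3) unfolding True no_edges by simp
    then show ?thesis
      using assms(1) True by simp
  next
    case False
    have finW: "finite W"
      using W(1) fin(1) by (rule finite_subset)
    then have "\<not> P (W - {w})"
      using min card_Diff1_less[OF finW that] by fastforce
    moreover have "W - {w} \<noteq> {}"
      using False that by blast
    ultimately have "card {e\<in>E. e \<subseteq> W - {w}} < k/2 * card (W - {w})"
      using W(1) unfolding P_def by auto
    moreover have "real (card (W - {w})) = card W - 1"
      using finW that by (simp add: of_nat_diff card_gt_0_iff)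
    moreover have "real (card {e\<in>E. e \<subseteq> W}) =
        card {e\<in>E. e \<subseteq> W - {w}} + degree {e\<in>E. e \<subseteq> W} w"
      using card_induced_edges_remove[OF fin(2)] by simp
    ultimately show ?thesis
      using W(3) by (simp add: algebra_simps)
  qed
  then show ?thesis
    using W that by blast
qed

lemma exists_edge_subset_left_degree_eq:
  assumes "bipartite_with V E A B" "\<forall>a\<in>A. m \<le> degree E a"
  obtains F where "F \<subseteq> E" "\<forall>a\<in>A. degree F a = m"
proof -
  have "\<exists>S. S \<subseteq> {e\<in>E. a \<in> e} \<and> card S = m" if "a \<in> A" for a
    using assms(2) that unfolding degree_def by (meson obtain_subset_with_card_n)
  then obtain S where S: "\<And>a. a \<in> A \<Longrightarrow> S a \<subseteq> {e\<in>E. a \<in> e} \<and> card (S a) = m"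
    by metis
  note unique = bipartite_with_edge_unique[OF bipartite_with_commute[THEN iffD1, OF assms(1)]]
  have "{e \<in> (\<Union>a'\<in>A. S a'). a \<in> e} = S a" if "a \<in> A" for a
  proof
    show "S a \<subseteq> {e \<in> (\<Union>a'\<in>A. S a'). a \<in> e}"
      using S[OF that] that by blast
    show "{e \<in> (\<Union>a'\<in>A. S a'). a \<in> e} \<subseteq> S a"
    proof
      fix e assume "e \<in> {e \<in> (\<Union>a'\<in>A. S a'). a \<in> e}"
      then obtain a' where "a' \<in> A" "e \<in> S a'" "a \<in> e"
        by blast
      moreover have "a' = a"
        using unique S calculation that by blast
      ultimately show "e \<in> S a"
        by simp
    qed
  qed
  then have "\<forall>a\<in>A. degree (\<Union>a'\<in>A. S a') a = m"
    using S unfolding degree_def by simp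
  moreover have "(\<Union>a\<in>A. S a) \<subseteq> E"
    using S by blast
  ultimately show ?thesis
    using that by blast
qed

definition dense_bounded_bipartite :: "real \<Rightarrow> 'a set \<Rightarrow> 'a set set \<Rightarrow> 'a set \<Rightarrow> 'a set \<Rightarrow> bool"
  where "dense_bounded_bipartite k V E A B \<longleftrightarrow> bipartite_with V E A B \<and>
    avg_degree V E \<ge> k / 4 \<and> (\<forall>v\<in>A. real (degree E v) \<le> k) \<and>
    (real (card A) \<ge> k ^ 6 * real (card B) \<or> real (max_degree V E) \<le> k ^ 7)"

lemma dense_subgraph_of_edges_meeting:
  fixes k :: real and E :: "'a set set" and B' :: "'a set"
  defines "F \<equiv> {e\<in>E. e \<inter> B' \<noteq> {}}"
  assumes fin: "finite V" and bip: "bipartite_with V E A B" and "A \<noteq> {}" "B' \<subseteq> B"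
    and "card B' \<le> card A" and deg: "\<forall>a\<in>A. degree E a \<le> k" and "k * card A \<le> 4 * card F"
  shows "subgraph (A \<union> B') F V E \<and> bipartite_with (A \<union> B') F A B' \<and>
    k/4 \<le> avg_degree (A \<union> B') F \<and> (\<forall>a\<in>A. degree F a \<le> k)"
proof (intro conjI)
  show bipF: "bipartite_with (A \<union> B') F A B'"
    unfolding F_def using bip \<open>B' \<subseteq> B\<close> by (rule bipartite_with_edges_meeting)
  have "A \<union> B' \<subseteq> V"
    using bipartite_withD(2)[OF bip] \<open>B' \<subseteq> B\<close> by blast
  then have finAB: "finite (A \<union> B')"
    using fin by (rule finite_subset)
  show "subgraph (A \<union> B') F V E"
    unfolding subgraph_def using graph_if_bipartite_with[OF finAB bipF] \<open>A \<union> B' \<subseteq> V\<close>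
    by (auto simp: F_def)
  show "k/4 \<le> avg_degree (A \<union> B') F"
    using finAB bipartite_withD(1)[OF bipF] assms(4,6,8) by (intro avg_degree_bipartite_ge) auto
  have "finite E"
    using finite_edges[OF graph_if_bipartite_with[OF fin bip]] .
  have "degree F a \<le> degree E a" for a
    unfolding F_def by (rule degree_mono[OF \<open>finite E\<close>]) blast
  then show "\<forall>a\<in>A. degree F a \<le> k"
    using deg by (meson of_nat_mono order_trans)
qed

lemma exists_dense_subgraph_left_regular:
  fixes k :: real
  assumes k: "2 \<le> k" and fin: "finite V" and bip: "bipartite_with V E A B"
    and "A \<noteq> {}" and "card B \<le> card A"
    and deg: "\<forall>a\<in>A. degree E a = m" and "k/2 \<le> m" "m \<le> k"
  shows "\<exists>VH EH A' B'. subgraph VH EH V E \<and> dense_bounded_bipartite k VH EH A' B'"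
proof -
  define F where "F B' = {e\<in>E. e \<inter> B' \<noteq> {}}" for B'
  define Bh where "Bh = {b\<in>B. k^7 < degree E b}"
  have finB: "finite B"
    using fin bipartite_withD(2)[OF bip] by simp
  have "card E = m * card A"
    using card_edges_eq_sum_degree[OF fin bipartite_with_commute[THEN iffD1, OF bip]] deg by simp
  have many_edges: "k * card A \<le> 4 * card (F B')" if "card E \<le> 2 * card (F B')" for B'
  proof -
    have "real m * card A \<le> 2 * card (F B')"
      using that \<open>card E = m * card A\<close> by (metis of_nat_le_iff of_nat_mult of_nat_numeral)
    moreover have "k * card A \<le> 2 * (real m * card A)"
      using mult_right_mono[OF \<open>k/2 \<le> m\<close>, of "card A"] by simp
    ultimately show ?thesis
      by linarith
  qed
  have card_F: "card (F B') = (\<Sum>b\<in>B'. degree E b)" if "B' \<subseteq> B" for B'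
    unfolding F_def using fin bip that by (rule card_edges_meeting_eq_sum_degree)
  have "Bh \<subseteq> B"
    unfolding Bh_def by blast
  have "card E = (\<Sum>b\<in>B. degree E b)"
    by (rule card_edges_eq_sum_degree[OF fin bip])
  also have "\<dots> = (\<Sum>b\<in>Bh. degree E b) + (\<Sum>b\<in>B - Bh. degree E b)"
    by (simp add: sum.subset_diff[OF \<open>Bh \<subseteq> B\<close> finB] add.commute)
  also have "\<dots> = card (F Bh) + card (F (B - Bh))"
    using card_F \<open>Bh \<subseteq> B\<close> by simp
  finally have "card E = card (F Bh) + card (F (B - Bh))" .
  then have F_le: "card (F Bh) \<le> card E" "card (F (B - Bh)) \<le> card E"
    by simp_all
  have deg_A: "\<forall>a\<in>A. degree E a \<le> k"
    using deg \<open>m \<le> k\<close> by simp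
  have finE: "finite E"
    using finite_edges[OF graph_if_bipartite_with[OF fin bip]] .
  from \<open>card E = card (F Bh) + _\<close> consider "card E \<le> 2 * card (F Bh)" | "card E \<le> 2 * card (F (B - Bh))"
    by linarith
  then show ?thesis
  proof cases
    case 1
    have "k^7 * card Bh \<le> (\<Sum>b\<in>Bh. real (degree E b))"
      using sum_bounded_below[of Bh "k^7" "\<lambda>b. real (degree E b)"] unfolding Bh_def
      by (simp add: mult.commute)
    also have "\<dots> = card (F Bh)"
      using card_F[of Bh] unfolding Bh_def by simp
    also have "\<dots> \<le> m * card A"
      using F_le(1) \<open>card E = m * card A\<close> by (metis of_nat_le_iff of_nat_mult)
    also have "\<dots> \<le> k * card A"
      using \<open>m \<le> k\<close> by (simp add: mult_right_mono)
    finally have "(k * k^6) * card Bh \<le> k * card A"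
      by (simp add: power_numeral_reduce)
    then have "k * (k^6 * card Bh) \<le> k * card A"
      by (simp add: mult.assoc)
    then have sparse: "k^6 * card Bh \<le> card A"
      using k by simp
    have "1 \<le> k^6"
      using k by (simp add: one_le_power)
    then have "real (card Bh) \<le> k^6 * card Bh"
      using mult_right_mono[of 1 "k^6" "card Bh"] by simp
    with sparse have "card Bh \<le> card A"
      by linarith
    then have "subgraph (A \<union> Bh) (F Bh) V E \<and> bipartite_with (A \<union> Bh) (F Bh) A Bh \<and>
        k/4 \<le> avg_degree (A \<union> Bh) (F Bh) \<and> (\<forall>a\<in>A. degree (F Bh) a \<le> k)"
      unfolding F_def
      by (rule dense_subgraph_of_edges_meeting[OF fin bip \<open>A \<noteq> {}\<close> \<open>Bh \<subseteq> B\<close> _ deg_A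
            many_edges[OF 1, unfolded F_def]])
    with sparse show ?thesis
      unfolding dense_bounded_bipartite_def by blast
  next
    case 2
    have "card (B - Bh) \<le> card A"
      using card_mono[OF finB, of "B - Bh"] \<open>card B \<le> card A\<close> by auto
    then have H: "subgraph (A \<union> (B - Bh)) (F (B - Bh)) V E \<and>
        bipartite_with (A \<union> (B - Bh)) (F (B - Bh)) A (B - Bh) \<and>
        k/4 \<le> avg_degree (A \<union> (B - Bh)) (F (B - Bh)) \<and> (\<forall>a\<in>A. degree (F (B - Bh)) a \<le> k)"
      unfolding F_def
      by (rule dense_subgraph_of_edges_meeting[OF fin bip \<open>A \<noteq> {}\<close> Diff_subset _ deg_A
            many_edges[OF 2, unfolded F_def]])
    have "k \<le> k^7"
      using k power_increasing[of 1 7 k] by simp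
    moreover have "degree (F (B - Bh)) b \<le> k^7" if "b \<in> B - Bh" for b
    proof -
      have "degree (F (B - Bh)) b \<le> degree E b"
        unfolding F_def by (rule degree_mono[OF finE]) blast
      moreover have "degree E b \<le> k^7"
        using that unfolding Bh_def by auto
      ultimately show ?thesis
        by linarith
    qed
    ultimately have "max_degree (A \<union> (B - Bh)) (F (B - Bh)) \<le> k^7"
      using H k fin bipartite_withD(2)[OF bip]
      by (intro max_degree_le) (auto intro: order_trans)
    with H show ?thesis
      unfolding dense_bounded_bipartite_def by blast
  qed
qed

lemma exists_dense_subgraph_larger_side:
  fixes k :: real
  assumes k: "2 \<le> k" and fin: "finite V" and bip: "bipartite_with V E A B"
    and "A \<noteq> {}" and "card B \<le> card A" and deg: "\<forall>a\<in>A. k/2 < degree E a"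
  shows "\<exists>VH EH A' B'. subgraph VH EH V E \<and> dense_bounded_bipartite k VH EH A' B'"
proof -
  define m where "m = nat \<lceil>k/2\<rceil>"
  have m: "k/2 \<le> m" "m \<le> k"
    using k of_int_ceiling_le_add_one[of "k/2"] unfolding m_def by linarith+
  have "\<forall>a\<in>A. m \<le> degree E a"
    using deg unfolding m_def by (auto simp: nat_le_iff ceiling_le_iff)
  then obtain F where F: "F \<subseteq> E" "\<forall>a\<in>A. degree F a = m"
    using exists_edge_subset_left_degree_eq[OF bip] by blast
  then obtain VH EH A' B' where "subgraph VH EH V F" "dense_bounded_bipartite k VH EH A' B'"
    using exists_dense_subgraph_left_regular[OF k fin bipartite_with_mono_edges[OF bip F(1)]
        \<open>A \<noteq> {}\<close> \<open>card B \<le> card A\<close> F(2) m] by blast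
  then show ?thesis
    using subgraph_mono[OF _ subset_refl F(1)] by blast
qed

lemma exists_dense_subgraph_min_degree:
  fixes k :: real
  assumes k: "2 \<le> k" and "finite V" "V \<noteq> {}" and bip: "bipartite_with V E A B"
    and deg: "\<forall>v\<in>V. k/2 < degree E v"
  shows "\<exists>VH EH A' B'. subgraph VH EH V E \<and> dense_bounded_bipartite k VH EH A' B'"
proof (cases "card B \<le> card A")
  case True
  moreover have "A \<noteq> {}"
    using True \<open>finite V\<close> \<open>V \<noteq> {}\<close> bipartite_withD(2)[OF bip] by auto
  ultimately show ?thesis
    using exists_dense_subgraph_larger_side[OF k \<open>finite V\<close> bip] deg bipartite_withD(2)[OF bip]
    by blast
next
  case False
  then have "B \<noteq> {}" "card A \<le> card B"
    by auto
  then show ?thesis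
    using exists_dense_subgraph_larger_side[OF k \<open>finite V\<close> bipartite_with_commute[THEN iffD1, OF bip]]
      deg bipartite_withD(2)[OF bip] by blast
qed

theorem lemma8:
  fixes k :: real and V :: "'a set" and E :: "'a set set"
  assumes "k \<ge> 2" and "graph V E" and "bipartite V E" and "avg_degree V E \<ge> k"
  shows "\<exists>VH EH A B. subgraph VH EH V E \<and> bipartite_with VH EH A B \<and>
           avg_degree VH EH \<ge> k / 4 \<and> (\<forall>v\<in>A. real (degree EH v) \<le> k) \<and>
           (real (card A) \<ge> k ^ 6 * real (card B) \<or> real (max_degree VH EH) \<le> k ^ 7)"
proof -
  obtain A B where bip: "bipartite_with V E A B"
    using assms(3) unfolding bipartite_def by blast
  obtain W where W: "W \<subseteq> V" "W \<noteq> {}" and deg: "\<forall>w\<in>W. k/2 < degree {e\<in>E. e \<subseteq> W} w"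
    using exists_induced_subgraph_min_degree[OF _ assms(2,4)] assms(1) by auto
  have "finite W"
    using assms(2) W(1) unfolding graph_def by (auto intro: finite_subset)
  then obtain VH EH A' B' where "subgraph VH EH W {e\<in>E. e \<subseteq> W}"
      and "dense_bounded_bipartite k VH EH A' B'"
    using exists_dense_subgraph_min_degree[OF assms(1) _ W(2) bipartite_with_induced[OF bip W(1)] deg]
    by blast
  then show ?thesis
    using subgraph_mono[OF _ W(1)] unfolding dense_bounded_bipartite_def by blast
qed

end
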